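(* Let $\mathbf{C}$ be a locally small category, $\Omega$ an object, $\Phi\colon\mathbf{C}^{\mathrm{op}}\to\mathbf{Pos}$ a functor whose fibres have all meets preserved by reindexing $f^*=\Phi f$, and $d_\Omega\in\Phi\Omega$. Let $\alpha_Y(S)=\bigwedge_{k\in S}k^*(d_\Omega)$, $\gamma_Y(d)=\{k\in\mathbf{C}(Y,\Omega)\mid d\preceq k^*(d_\Omega)\}$ and $\mathrm{cl}_Y=\gamma_Y\circ\alpha_Y$. Let $F\colon\mathbf{C}\to\mathbf{C}$ be a functor, $(\mathit{ev}_\lambda\colon F\Omega\to\Omega)_{\lambda\in\Lambda}$ morphisms, $\Lambda_Y(S)=\{\mathit{ev}_\lambda\circ Fh\mid\lambda\in\Lambda,h\in S\}$, and $\mathcal{K}_X=\alpha_{FX}\circ\Lambda_X\circ\gamma_X\colon\Phi X\to\Phi(FX)$. Let $\mathrm{cl}'_X$ be a closure operator on $(\mathcal{P}(\mathbf{C}(X,\Omega)),\subseteq)$ with $\mathrm{cl}'_X\subseteq\mathrm{cl}_X$ pointwise. Then $\mathrm{cl}'_X$ is compatible (i.e. $\Lambda_X\circ\mathrm{cl}'_X\circ\mathrm{cl}_X\subseteq\mathrm{cl}_{FX}\circ\Lambda_X\circ\mathrm{cl}'_X$ pointwise) if and only if the depth-1 self-separation property holds: for every $d\in\Phi X$ and every $S\subseteq\mathbf{C}(X,\Omega)$ with $S=\mathrm{cl}'_X(S)$ and $\alpha_X(S)=d$, we have $\alpha_{FX}(\Lambda_X(S))=\mathcal{K}_X(d)$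.
   Context: A closure operator is a monotone, idempotent, extensive map. A set $S$ of predicates is called initial for $d$ if $\alpha_X(S)=d$. *)

theory Defs
  imports Main
begin

record ('o, 'a) cat =
  cObj  :: "'o set"
  cArr  :: "'a set"
  cDom  :: "'a \<Rightarrow> 'o"
  cCod  :: "'a \<Rightarrow> 'o"
  cComp :: "'a \<Rightarrow> 'a \<Rightarrow> 'a"   (* cComp C g f = g \<circ> f *)
  cId   :: "'o \<Rightarrow> 'a"

definition category :: "('o, 'a) cat \<Rightarrow> bool" where
  "category C \<longleftrightarrow>
     (\<forall>f\<in>cArr C. cDom C f \<in> cObj C \<and> cCod C f \<in> cObj C) \<and>
     (\<forall>a\<in>cObj C. cId C a \<in> cArr C \<and> cDom C (cId C a) = a \<and> cCod C (cId C a) = a) \<and>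
     (\<forall>f\<in>cArr C. \<forall>g\<in>cArr C. cCod C f = cDom C g \<longrightarrow>
        cComp C g f \<in> cArr C \<and> cDom C (cComp C g f) = cDom C f \<and> cCod C (cComp C g f) = cCod C g) \<and>
     (\<forall>f\<in>cArr C. cComp C f (cId C (cDom C f)) = f \<and> cComp C (cId C (cCod C f)) f = f) \<and>
     (\<forall>f\<in>cArr C. \<forall>g\<in>cArr C. \<forall>h\<in>cArr C. cCod C f = cDom C g \<longrightarrow> cCod C g = cDom C h \<longrightarrow>
        cComp C h (cComp C g f) = cComp C (cComp C h g) f)"

definition hom :: "('o, 'a) cat \<Rightarrow> 'o \<Rightarrow> 'o \<Rightarrow> 'a set" where
  "hom C x y = {f \<in> cArr C. cDom C f = x \<and> cCod C f = y}"

definition endofunctor :: "('o, 'a) cat \<Rightarrow> ('o \<Rightarrow> 'o) \<Rightarrow> ('a \<Rightarrow> 'a) \<Rightarrow> bool" where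
  "endofunctor C Fo Fa \<longleftrightarrow>
     (\<forall>a\<in>cObj C. Fo a \<in> cObj C) \<and>
     (\<forall>f\<in>cArr C. Fa f \<in> cArr C \<and> cDom C (Fa f) = Fo (cDom C f) \<and> cCod C (Fa f) = Fo (cCod C f)) \<and>
     (\<forall>a\<in>cObj C. Fa (cId C a) = cId C (Fo a)) \<and>
     (\<forall>f\<in>cArr C. \<forall>g\<in>cArr C. cCod C f = cDom C g \<longrightarrow> Fa (cComp C g f) = cComp C (Fa g) (Fa f))"

record ('o, 'a, 'p) pfun =
  fib :: "'o \<Rightarrow> 'p set"
  fle :: "'o \<Rightarrow> 'p \<Rightarrow> 'p \<Rightarrow> bool"
  rix :: "'a \<Rightarrow> 'p \<Rightarrow> 'p"           (* reindexing f^* = \<Phi> f : \<Phi>(cod f) \<rightarrow> \<Phi>(dom f) *)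

definition is_glb :: "('o, 'a, 'p) pfun \<Rightarrow> 'o \<Rightarrow> 'p set \<Rightarrow> 'p \<Rightarrow> bool" where
  "is_glb \<Phi> a A m \<longleftrightarrow> m \<in> fib \<Phi> a \<and> (\<forall>x\<in>A. fle \<Phi> a m x) \<and>
     (\<forall>y\<in>fib \<Phi> a. (\<forall>x\<in>A. fle \<Phi> a y x) \<longrightarrow> fle \<Phi> a y m)"

definition meet :: "('o, 'a, 'p) pfun \<Rightarrow> 'o \<Rightarrow> 'p set \<Rightarrow> 'p" where
  "meet \<Phi> a A = (THE m. is_glb \<Phi> a A m)"

definition poset_functor :: "('o, 'a) cat \<Rightarrow> ('o, 'a, 'p) pfun \<Rightarrow> bool" where
  "poset_functor C \<Phi> \<longleftrightarrow>
     (\<forall>a\<in>cObj C. (\<forall>x\<in>fib \<Phi> a. fle \<Phi> a x x) \<and>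
        (\<forall>x\<in>fib \<Phi> a. \<forall>y\<in>fib \<Phi> a. fle \<Phi> a x y \<longrightarrow> fle \<Phi> a y x \<longrightarrow> x = y) \<and>
        (\<forall>x\<in>fib \<Phi> a. \<forall>y\<in>fib \<Phi> a. \<forall>z\<in>fib \<Phi> a. fle \<Phi> a x y \<longrightarrow> fle \<Phi> a y z \<longrightarrow> fle \<Phi> a x z)) \<and>
     (\<forall>f\<in>cArr C. \<forall>p\<in>fib \<Phi> (cCod C f). rix \<Phi> f p \<in> fib \<Phi> (cDom C f)) \<and>
     (\<forall>f\<in>cArr C. \<forall>p\<in>fib \<Phi> (cCod C f). \<forall>q\<in>fib \<Phi> (cCod C f).
        fle \<Phi> (cCod C f) p q \<longrightarrow> fle \<Phi> (cDom C f) (rix \<Phi> f p) (rix \<Phi> f q)) \<and>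
     (\<forall>a\<in>cObj C. \<forall>p\<in>fib \<Phi> a. rix \<Phi> (cId C a) p = p) \<and>
     (\<forall>f\<in>cArr C. \<forall>g\<in>cArr C. cCod C f = cDom C g \<longrightarrow>
        (\<forall>p\<in>fib \<Phi> (cCod C g). rix \<Phi> (cComp C g f) p = rix \<Phi> f (rix \<Phi> g p)))"

definition meets_preserved :: "('o, 'a) cat \<Rightarrow> ('o, 'a, 'p) pfun \<Rightarrow> bool" where
  "meets_preserved C \<Phi> \<longleftrightarrow>
     (\<forall>a\<in>cObj C. \<forall>A. A \<subseteq> fib \<Phi> a \<longrightarrow> (\<exists>m. is_glb \<Phi> a A m)) \<and>
     (\<forall>f\<in>cArr C. \<forall>A. A \<subseteq> fib \<Phi> (cCod C f) \<longrightarrow>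
        rix \<Phi> f (meet \<Phi> (cCod C f) A) = meet \<Phi> (cDom C f) (rix \<Phi> f ` A))"

definition alpha :: "('o, 'a, 'p) pfun \<Rightarrow> 'p \<Rightarrow> 'o \<Rightarrow> 'a set \<Rightarrow> 'p" where
  "alpha \<Phi> dO Y S = meet \<Phi> Y ((\<lambda>k. rix \<Phi> k dO) ` S)"

definition gamma :: "('o, 'a) cat \<Rightarrow> ('o, 'a, 'p) pfun \<Rightarrow> 'o \<Rightarrow> 'p \<Rightarrow> 'o \<Rightarrow> 'p \<Rightarrow> 'a set" where
  "gamma C \<Phi> Om dO Y d = {k \<in> hom C Y Om. fle \<Phi> Y d (rix \<Phi> k dO)}"

definition clo :: "('o, 'a) cat \<Rightarrow> ('o, 'a, 'p) pfun \<Rightarrow> 'o \<Rightarrow> 'p \<Rightarrow> 'o \<Rightarrow> 'a set \<Rightarrow> 'a set" where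
  "clo C \<Phi> Om dO Y S = gamma C \<Phi> Om dO Y (alpha \<Phi> dO Y S)"

definition Lift :: "('o, 'a) cat \<Rightarrow> ('a \<Rightarrow> 'a) \<Rightarrow> ('l \<Rightarrow> 'a) \<Rightarrow> 'l set \<Rightarrow> 'a set \<Rightarrow> 'a set" where
  "Lift C Fa ev Lam S = {cComp C (ev l) (Fa h) | l h. l \<in> Lam \<and> h \<in> S}"

definition Kop :: "('o, 'a) cat \<Rightarrow> ('o, 'a, 'p) pfun \<Rightarrow> 'o \<Rightarrow> 'p \<Rightarrow> ('o \<Rightarrow> 'o) \<Rightarrow> ('a \<Rightarrow> 'a)
                   \<Rightarrow> ('l \<Rightarrow> 'a) \<Rightarrow> 'l set \<Rightarrow> 'o \<Rightarrow> 'p \<Rightarrow> 'p" where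
  "Kop C \<Phi> Om dO Fo Fa ev Lam X d =
     alpha \<Phi> dO (Fo X) (Lift C Fa ev Lam (gamma C \<Phi> Om dO X d))"

definition closure_operator_on :: "'a set \<Rightarrow> ('a set \<Rightarrow> 'a set) \<Rightarrow> bool" where
  "closure_operator_on H c \<longleftrightarrow>
     (\<forall>S. S \<subseteq> H \<longrightarrow> c S \<subseteq> H) \<and>
     (\<forall>S. S \<subseteq> H \<longrightarrow> S \<subseteq> c S) \<and>
     (\<forall>S T. S \<subseteq> T \<longrightarrow> T \<subseteq> H \<longrightarrow> c S \<subseteq> c T) \<and>
     (\<forall>S. S \<subseteq> H \<longrightarrow> c (c S) = c S)"

end

theory Submission
  imports Defs
begin

text \<open>
  Both \<open>cl\<^sub>X\<close> and the smaller closure \<open>cl'\<^sub>X\<close> are closure operators, so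
  \<open>cl'\<^sub>X (cl\<^sub>X S) = cl\<^sub>X S = cl\<^sub>X (cl'\<^sub>X S)\<close>; hence compatibility says exactly that
  \<open>\<Lambda>\<^sub>X (cl\<^sub>X T) \<subseteq> cl\<^sub>F\<^sub>X (\<Lambda>\<^sub>X T)\<close> for every \<open>cl'\<^sub>X\<close>-closed \<open>T\<close>.
  On the other side \<open>K\<^sub>X (\<alpha>\<^sub>X T) = \<alpha>\<^sub>F\<^sub>X (\<Lambda>\<^sub>X (cl\<^sub>X T))\<close>, and by the Galois
  connection two sets \<open>A \<subseteq> B\<close> of predicates have the same meet iff \<open>B \<subseteq> cl A\<close>.
  Applied to \<open>\<Lambda>\<^sub>X T \<subseteq> \<Lambda>\<^sub>X (cl\<^sub>X T)\<close>, the two conditions coincide.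
\<close>

lemma closure_operator_onD:
  assumes "closure_operator_on H c" and "S \<subseteq> H"
  shows closure_operator_on_subset: "c S \<subseteq> H"
    and closure_operator_on_extensive: "S \<subseteq> c S"
    and closure_operator_on_idem: "c (c S) = c S"
  using assms unfolding closure_operator_on_def by simp_all

lemma closure_operator_on_mono:
  assumes "closure_operator_on H c" and "S \<subseteq> T" and "T \<subseteq> H"
  shows "c S \<subseteq> c T"
  using assms unfolding closure_operator_on_def by simp

lemma closure_operator_on_below_absorb:
  assumes c: "closure_operator_on H c" and c': "closure_operator_on H c'"
    and below: "\<forall>S. S \<subseteq> H \<longrightarrow> c' S \<subseteq> c S" and S: "S \<subseteq> H"
  shows "c' (c S) = c S" and "c (c' S) = c S"
proof -
  have cS: "c S \<subseteq> H" using closure_operator_on_subset[OF c S] .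
  show "c' (c S) = c S"
  proof
    show "c' (c S) \<subseteq> c S"
      using below cS closure_operator_on_idem[OF c S] by blast
    show "c S \<subseteq> c' (c S)" using closure_operator_on_extensive[OF c' cS] .
  qed
  show "c (c' S) = c S"
  proof
    have "c (c' S) \<subseteq> c (c S)"
      using closure_operator_on_mono[OF c _ cS] below S by blast
    then show "c (c' S) \<subseteq> c S" using closure_operator_on_idem[OF c S] by simp
    show "c S \<subseteq> c (c' S)"
      using closure_operator_on_mono[OF c closure_operator_on_extensive[OF c' S]]
        closure_operator_on_subset[OF c' S] .
  qed
qed

lemma closure_operator_on_all_image_iff:
  assumes "closure_operator_on H c"
  shows "(\<forall>S. S \<subseteq> H \<longrightarrow> P (c S)) \<longleftrightarrow> (\<forall>T. T \<subseteq> H \<longrightarrow> T = c T \<longrightarrow> P T)"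
  using closure_operator_on_subset[OF assms] closure_operator_on_idem[OF assms] by metis

locale predicate_galois =
  fixes C :: "('o, 'a) cat" and \<Phi> :: "('o, 'a, 'p) pfun" and Om :: 'o and dO :: 'p
  assumes poset_functor: "poset_functor C \<Phi>"
    and meets_exist: "\<And>Y A. Y \<in> cObj C \<Longrightarrow> A \<subseteq> fib \<Phi> Y \<Longrightarrow> \<exists>m. is_glb \<Phi> Y A m"
    and dO: "dO \<in> fib \<Phi> Om"
begin

lemma fibre_partial_order:
  assumes "Y \<in> cObj C"
  shows "(\<forall>x\<in>fib \<Phi> Y. fle \<Phi> Y x x) \<and>
    (\<forall>x\<in>fib \<Phi> Y. \<forall>y\<in>fib \<Phi> Y. fle \<Phi> Y x y \<longrightarrow> fle \<Phi> Y y x \<longrightarrow> x = y) \<and>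
    (\<forall>x\<in>fib \<Phi> Y. \<forall>y\<in>fib \<Phi> Y. \<forall>z\<in>fib \<Phi> Y. fle \<Phi> Y x y \<longrightarrow> fle \<Phi> Y y z \<longrightarrow> fle \<Phi> Y x z)"
  using conjunct1[OF poset_functor[unfolded poset_functor_def]] assms by (rule bspec)

lemma fle_refl: "Y \<in> cObj C \<Longrightarrow> x \<in> fib \<Phi> Y \<Longrightarrow> fle \<Phi> Y x x"
  using fibre_partial_order by blast

lemma fle_antisym:
  "Y \<in> cObj C \<Longrightarrow> x \<in> fib \<Phi> Y \<Longrightarrow> y \<in> fib \<Phi> Y \<Longrightarrow> fle \<Phi> Y x y \<Longrightarrow> fle \<Phi> Y y x \<Longrightarrow> x = y"
  using fibre_partial_order by blast

lemma fle_trans: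
  "Y \<in> cObj C \<Longrightarrow> x \<in> fib \<Phi> Y \<Longrightarrow> y \<in> fib \<Phi> Y \<Longrightarrow> z \<in> fib \<Phi> Y \<Longrightarrow>
    fle \<Phi> Y x y \<Longrightarrow> fle \<Phi> Y y z \<Longrightarrow> fle \<Phi> Y x z"
  using fibre_partial_order by blast

lemma rix_in_fib: "f \<in> cArr C \<Longrightarrow> p \<in> fib \<Phi> (cCod C f) \<Longrightarrow> rix \<Phi> f p \<in> fib \<Phi> (cDom C f)"
  using conjunct1[OF conjunct2[OF poset_functor[unfolded poset_functor_def]]] by blast

lemma rix_dO_in_fib: "k \<in> hom C Y Om \<Longrightarrow> rix \<Phi> k dO \<in> fib \<Phi> Y"
  using rix_in_fib[of k dO] dO unfolding hom_def by simp

lemma is_glb_unique: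
  assumes "Y \<in> cObj C" and "is_glb \<Phi> Y A m" and "is_glb \<Phi> Y A m'"
  shows "m' = m"
proof (rule fle_antisym[OF assms(1)])
  show "m' \<in> fib \<Phi> Y" "m \<in> fib \<Phi> Y"
    using assms(2,3) unfolding is_glb_def by simp_all
  show "fle \<Phi> Y m' m" "fle \<Phi> Y m m'"
    using assms(2,3) unfolding is_glb_def by (meson, meson)
qed

lemma is_glb_alpha:
  assumes Y: "Y \<in> cObj C" and S: "S \<subseteq> hom C Y Om"
  shows "is_glb \<Phi> Y ((\<lambda>k. rix \<Phi> k dO) ` S) (alpha \<Phi> dO Y S)"
proof -
  have "(\<lambda>k. rix \<Phi> k dO) ` S \<subseteq> fib \<Phi> Y" using S rix_dO_in_fib by auto
  then obtain m where m: "is_glb \<Phi> Y ((\<lambda>k. rix \<Phi> k dO) ` S) m"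
    using meets_exist[OF Y] by blast
  then have "alpha \<Phi> dO Y S = m"
    unfolding alpha_def meet_def using is_glb_unique[OF Y m] by (rule the_equality)
  with m show ?thesis by simp
qed

lemma alpha_in_fib: "Y \<in> cObj C \<Longrightarrow> S \<subseteq> hom C Y Om \<Longrightarrow> alpha \<Phi> dO Y S \<in> fib \<Phi> Y"
  using is_glb_alpha unfolding is_glb_def by blast

lemma subset_gamma_iff:
  assumes Y: "Y \<in> cObj C" and S: "S \<subseteq> hom C Y Om" and d: "d \<in> fib \<Phi> Y"
  shows "S \<subseteq> gamma C \<Phi> Om dO Y d \<longleftrightarrow> fle \<Phi> Y d (alpha \<Phi> dO Y S)"
proof
  assume "S \<subseteq> gamma C \<Phi> Om dO Y d"
  then show "fle \<Phi> Y d (alpha \<Phi> dO Y S)"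
    using is_glb_alpha[OF Y S] d unfolding is_glb_def gamma_def by blast
next
  assume le: "fle \<Phi> Y d (alpha \<Phi> dO Y S)"
  have "fle \<Phi> Y d (rix \<Phi> k dO)" if k: "k \<in> S" for k
  proof -
    have "fle \<Phi> Y (alpha \<Phi> dO Y S) (rix \<Phi> k dO)"
      using is_glb_alpha[OF Y S] k unfolding is_glb_def by blast
    then show ?thesis
      using fle_trans[OF Y d alpha_in_fib[OF Y S] rix_dO_in_fib] le k S by blast
  qed
  then show "S \<subseteq> gamma C \<Phi> Om dO Y d" using S unfolding gamma_def by blast
qed

lemma clo_subset_hom: "clo C \<Phi> Om dO Y S \<subseteq> hom C Y Om"
  unfolding clo_def gamma_def by blast

lemma clo_extensive: "Y \<in> cObj C \<Longrightarrow> S \<subseteq> hom C Y Om \<Longrightarrow> S \<subseteq> clo C \<Phi> Om dO Y S"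
  unfolding clo_def using subset_gamma_iff fle_refl alpha_in_fib by blast

lemma alpha_antimono:
  assumes Y: "Y \<in> cObj C" and ST: "S \<subseteq> T" and T: "T \<subseteq> hom C Y Om"
  shows "fle \<Phi> Y (alpha \<Phi> dO Y T) (alpha \<Phi> dO Y S)"
proof -
  have "S \<subseteq> gamma C \<Phi> Om dO Y (alpha \<Phi> dO Y T)"
    using ST clo_extensive[OF Y T] unfolding clo_def by (rule subset_trans)
  moreover have "S \<subseteq> hom C Y Om" using ST T by (rule subset_trans)
  ultimately show ?thesis using subset_gamma_iff[OF Y _ alpha_in_fib[OF Y T]] by simp
qed

lemma alpha_clo:
  assumes Y: "Y \<in> cObj C" and S: "S \<subseteq> hom C Y Om"
  shows "alpha \<Phi> dO Y (clo C \<Phi> Om dO Y S) = alpha \<Phi> dO Y S"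
proof (rule fle_antisym[OF Y alpha_in_fib[OF Y clo_subset_hom] alpha_in_fib[OF Y S]])
  show "fle \<Phi> Y (alpha \<Phi> dO Y (clo C \<Phi> Om dO Y S)) (alpha \<Phi> dO Y S)"
    using alpha_antimono[OF Y clo_extensive[OF Y S] clo_subset_hom] .
  show "fle \<Phi> Y (alpha \<Phi> dO Y S) (alpha \<Phi> dO Y (clo C \<Phi> Om dO Y S))"
    using subset_gamma_iff[OF Y clo_subset_hom[of Y S] alpha_in_fib[OF Y S]] unfolding clo_def by simp
qed

lemma clo_mono:
  assumes Y: "Y \<in> cObj C" and ST: "S \<subseteq> T" and T: "T \<subseteq> hom C Y Om"
  shows "clo C \<Phi> Om dO Y S \<subseteq> clo C \<Phi> Om dO Y T"
proof -
  have S: "S \<subseteq> hom C Y Om" using ST T by (rule subset_trans)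
  have "fle \<Phi> Y (alpha \<Phi> dO Y T) (alpha \<Phi> dO Y (clo C \<Phi> Om dO Y S))"
    using alpha_antimono[OF Y ST T] alpha_clo[OF Y S] by simp
  then show ?thesis
    using subset_gamma_iff[OF Y clo_subset_hom[of Y S] alpha_in_fib[OF Y T]]
    unfolding clo_def[of C \<Phi> Om dO Y T] by simp
qed

lemma clo_idem:
  "Y \<in> cObj C \<Longrightarrow> S \<subseteq> hom C Y Om \<Longrightarrow>
    clo C \<Phi> Om dO Y (clo C \<Phi> Om dO Y S) = clo C \<Phi> Om dO Y S"
  using alpha_clo unfolding clo_def[of C \<Phi> Om dO Y "clo C \<Phi> Om dO Y S"] by (simp add: clo_def)

lemma closure_operator_on_clo:
  "Y \<in> cObj C \<Longrightarrow> closure_operator_on (hom C Y Om) (clo C \<Phi> Om dO Y)"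
  unfolding closure_operator_on_def
  using clo_subset_hom clo_extensive clo_mono clo_idem by simp

lemma alpha_eq_iff_subset_clo:
  assumes Y: "Y \<in> cObj C" and AB: "A \<subseteq> B" and B: "B \<subseteq> hom C Y Om"
  shows "alpha \<Phi> dO Y A = alpha \<Phi> dO Y B \<longleftrightarrow> B \<subseteq> clo C \<Phi> Om dO Y A"
proof
  assume "alpha \<Phi> dO Y A = alpha \<Phi> dO Y B"
  then show "B \<subseteq> clo C \<Phi> Om dO Y A"
    using clo_extensive[OF Y B] unfolding clo_def by simp
next
  have A: "A \<subseteq> hom C Y Om" using AB B by (rule subset_trans)
  assume "B \<subseteq> clo C \<Phi> Om dO Y A"
  then have "fle \<Phi> Y (alpha \<Phi> dO Y (clo C \<Phi> Om dO Y A)) (alpha \<Phi> dO Y B)"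
    using alpha_antimono[OF Y _ clo_subset_hom[of Y A]] by simp
  then have "fle \<Phi> Y (alpha \<Phi> dO Y A) (alpha \<Phi> dO Y B)"
    using alpha_clo[OF Y A] by simp
  then show "alpha \<Phi> dO Y A = alpha \<Phi> dO Y B"
    using fle_antisym[OF Y alpha_in_fib[OF Y A] alpha_in_fib[OF Y B]]
      alpha_antimono[OF Y AB B] by simp
qed

end

lemma Lift_mono: "S \<subseteq> T \<Longrightarrow> Lift C Fa ev Lam S \<subseteq> Lift C Fa ev Lam T"
  unfolding Lift_def by blast

lemma endofunctor_hom:
  assumes "endofunctor C Fo Fa" and "h \<in> hom C Y Z"
  shows "Fa h \<in> hom C (Fo Y) (Fo Z)"
  using conjunct1[OF conjunct2[OF assms(1)[unfolded endofunctor_def]]] assms(2)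
  unfolding hom_def by simp

lemma category_comp_hom:
  assumes "category C" and "f \<in> hom C X Y" and "g \<in> hom C Y Z"
  shows "cComp C g f \<in> hom C X Z"
  using conjunct1[OF conjunct2[OF conjunct2[OF assms(1)[unfolded category_def]]]] assms(2,3)
  unfolding hom_def by simp

lemma Lift_subset_hom:
  assumes cat: "category C" and F: "endofunctor C Fo Fa"
    and ev: "\<forall>l\<in>Lam. ev l \<in> hom C (Fo Om) Om" and S: "S \<subseteq> hom C X Om"
  shows "Lift C Fa ev Lam S \<subseteq> hom C (Fo X) Om"
proof
  fix k assume "k \<in> Lift C Fa ev Lam S"
  then obtain l h where k: "k = cComp C (ev l) (Fa h)" and l: "l \<in> Lam" and h: "h \<in> S"
    unfolding Lift_def by blast
  have "Fa h \<in> hom C (Fo X) (Fo Om)" using endofunctor_hom[OF F] h S by blast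
  then show "k \<in> hom C (Fo X) Om"
    unfolding k using category_comp_hom[OF cat] ev l by blast
qed

context predicate_galois
begin

lemma alpha_Lift_eq_Kop_iff:
  assumes cat: "category C" and F: "endofunctor C Fo Fa"
    and ev: "\<forall>l\<in>Lam. ev l \<in> hom C (Fo Om) Om"
    and X: "X \<in> cObj C" and S: "S \<subseteq> hom C X Om"
  shows "alpha \<Phi> dO (Fo X) (Lift C Fa ev Lam S) = Kop C \<Phi> Om dO Fo Fa ev Lam X (alpha \<Phi> dO X S)
    \<longleftrightarrow> Lift C Fa ev Lam (clo C \<Phi> Om dO X S) \<subseteq> clo C \<Phi> Om dO (Fo X) (Lift C Fa ev Lam S)"
proof -
  have "Kop C \<Phi> Om dO Fo Fa ev Lam X (alpha \<Phi> dO X S)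
      = alpha \<Phi> dO (Fo X) (Lift C Fa ev Lam (clo C \<Phi> Om dO X S))"
    unfolding Kop_def clo_def ..
  moreover have "Fo X \<in> cObj C" using F X unfolding endofunctor_def by blast
  ultimately show ?thesis
    using alpha_eq_iff_subset_clo[OF _ Lift_mono[OF clo_extensive[OF X S]]
        Lift_subset_hom[OF cat F ev clo_subset_hom]] by simp
qed

end

theorem lemma3:
  fixes C :: "('o, 'a) cat" and \<Phi> :: "('o, 'a, 'p) pfun"
    and Om X :: 'o and dO :: 'p
    and Fo :: "'o \<Rightarrow> 'o" and Fa :: "'a \<Rightarrow> 'a"
    and ev :: "'l \<Rightarrow> 'a" and Lam :: "'l set"
    and clp :: "'a set \<Rightarrow> 'a set"
  assumes "category C"
    and "poset_functor C \<Phi>"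
    and "meets_preserved C \<Phi>"
    and "Om \<in> cObj C" and "X \<in> cObj C"
    and "dO \<in> fib \<Phi> Om"
    and "endofunctor C Fo Fa"
    and "\<forall>l\<in>Lam. ev l \<in> hom C (Fo Om) Om"
    and "closure_operator_on (hom C X Om) clp"
    and "\<forall>S. S \<subseteq> hom C X Om \<longrightarrow> clp S \<subseteq> clo C \<Phi> Om dO X S"
  shows "(\<forall>S. S \<subseteq> hom C X Om \<longrightarrow>
            Lift C Fa ev Lam (clp (clo C \<Phi> Om dO X S))
              \<subseteq> clo C \<Phi> Om dO (Fo X) (Lift C Fa ev Lam (clp S)))
     \<longleftrightarrow>
         (\<forall>d\<in>fib \<Phi> X. \<forall>S. S \<subseteq> hom C X Om \<longrightarrow> S = clp S \<longrightarrow> alpha \<Phi> dO X S = d \<longrightarrow>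
            alpha \<Phi> dO (Fo X) (Lift C Fa ev Lam S) = Kop C \<Phi> Om dO Fo Fa ev Lam X d)"
    (is "?compatible \<longleftrightarrow> ?self_separating")
proof -
  interpret predicate_galois C \<Phi> Om dO
  proof
    show "\<exists>m. is_glb \<Phi> Y A m" if "Y \<in> cObj C" and "A \<subseteq> fib \<Phi> Y" for Y A
      using conjunct1[OF assms(3)[unfolded meets_preserved_def]] that by blast
  qed (fact assms)+
  let ?compatible_at = "\<lambda>T. Lift C Fa ev Lam (clo C \<Phi> Om dO X T)
    \<subseteq> clo C \<Phi> Om dO (Fo X) (Lift C Fa ev Lam T)"
  note absorb = closure_operator_on_below_absorb[OF closure_operator_on_clo[OF assms(5)] assms(9,10)]
  have "?compatible \<longleftrightarrow> (\<forall>S. S \<subseteq> hom C X Om \<longrightarrow> ?compatible_at (clp S))"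
    using absorb by simp
  also have "\<dots> \<longleftrightarrow> (\<forall>T. T \<subseteq> hom C X Om \<longrightarrow> T = clp T \<longrightarrow> ?compatible_at T)"
    by (rule closure_operator_on_all_image_iff[OF assms(9), where P = ?compatible_at])
  also have "\<dots> \<longleftrightarrow> ?self_separating"
    using alpha_Lift_eq_Kop_iff[OF assms(1,7,8,5)] alpha_in_fib[OF assms(5)] by auto
  finally show ?thesis .
qed

end
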